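(* Let $\mathrm{Lab}$ be a labelling system on a finite simplicial tree $T$ with index set $\{1,\dots,N\}$. Then every edge of $T$ is useless if and only if there is a full vertex, i.e. a vertex $z$ with $\mathrm{Lab}(z)=\{1,\dots,N\}$.
   Context: A labelling system on a finite simplicial tree $T$ assigns to each vertex $v$ a subset $\mathrm{Lab}(v)\subset\{1,\dots,N\}$ such that (A) $\mathrm{Lab}(a)\cap\mathrm{Lab}(b)\subset\mathrm{Lab}(x)$ whenever $x$ is a vertex on the shortest path $[ab]$ between vertices $a,b$, and (B) $\bigcup_v\mathrm{Lab}(v)=\{1,\dots,N\}$. Removing the open edge $e$ from $T$ leaves two closed connected components $T^+(e)$, $T^-(e)$. The edge $e$ is useless if $\bigcup_{v\in T^+(e)}\mathrm{Lab}(v)$ or $\bigcup_{v\in T^-(e)}\mathrm{Lab}(v)$ equals $\{1,\dots,N\}$, and useful otherwise. *)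

theory Defs
  imports Main
begin

text \<open>A finite simplicial tree: finite nonempty vertex set V, symmetric irreflexive
edge relation E (pairs of vertices, each undirected edge stored in both directions),
connected and without cycles.\<close>

definition walk :: "('a \<times> 'a) set \<Rightarrow> 'a list \<Rightarrow> 'a \<Rightarrow> 'a \<Rightarrow> bool" where
  "walk E p a b \<longleftrightarrow> p \<noteq> [] \<and> hd p = a \<and> last p = b \<and>
     (\<forall>i. Suc i < length p \<longrightarrow> (p ! i, p ! Suc i) \<in> E)"

definition is_cycle :: "('a \<times> 'a) set \<Rightarrow> 'a list \<Rightarrow> bool" where
  "is_cycle E p \<longleftrightarrow> distinct p \<and> 3 \<le> length p \<and> walk E p (hd p) (last p)
     \<and> (last p, hd p) \<in> E"

definition simplicial_tree :: "'a set \<Rightarrow> ('a \<times> 'a) set \<Rightarrow> bool" where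
  "simplicial_tree V E \<longleftrightarrow> finite V \<and> V \<noteq> {} \<and> E \<subseteq> V \<times> V \<and> sym E
     \<and> (\<forall>x. (x, x) \<notin> E) \<and> (\<forall>a\<in>V. \<forall>b\<in>V. (a, b) \<in> E\<^sup>*)
     \<and> (\<nexists>p. is_cycle E p)"

definition geodesic :: "('a \<times> 'a) set \<Rightarrow> 'a list \<Rightarrow> 'a \<Rightarrow> 'a \<Rightarrow> bool" where
  "geodesic E p a b \<longleftrightarrow> walk E p a b \<and> (\<forall>q. walk E q a b \<longrightarrow> length p \<le> length q)"

definition on_path :: "('a \<times> 'a) set \<Rightarrow> 'a \<Rightarrow> 'a \<Rightarrow> 'a \<Rightarrow> bool" where
  "on_path E a b x \<longleftrightarrow> (\<exists>p. geodesic E p a b \<and> x \<in> set p)"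

definition labelling_system ::
  "'a set \<Rightarrow> ('a \<times> 'a) set \<Rightarrow> nat \<Rightarrow> ('a \<Rightarrow> nat set) \<Rightarrow> bool" where
  "labelling_system V E N Lab \<longleftrightarrow>
     (\<forall>a\<in>V. \<forall>b\<in>V. \<forall>x. on_path E a b x \<longrightarrow> Lab a \<inter> Lab b \<subseteq> Lab x)
     \<and> (\<Union>v\<in>V. Lab v) = {1..N}"

definition side :: "('a \<times> 'a) set \<Rightarrow> 'a \<Rightarrow> 'a \<Rightarrow> 'a set" where
  "side E u v = {x. (u, x) \<in> (E - {(u, v), (v, u)})\<^sup>*}"

definition useless_edge ::
  "('a \<times> 'a) set \<Rightarrow> nat \<Rightarrow> ('a \<Rightarrow> nat set) \<Rightarrow> 'a \<Rightarrow> 'a \<Rightarrow> bool" where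
  "useless_edge E N Lab u v \<longleftrightarrow>
     (\<Union>x\<in>side E u v. Lab x) = {1..N} \<or> (\<Union>x\<in>side E v u. Lab x) = {1..N}"

end

theory Submission
  imports Defs
begin

(* "If": if z is full, every edge (u,v) has z on one of its two sides, so that
   side already carries every label.

   "Only if": the key fact is that a vertex z all of whose "own" sides side E z w
   (one for each neighbour w) carry every label is itself full.  Indeed, for a
   label i take a vertex a carrying i; if a lies beyond the edge (z,w), pick b on
   z's side of that edge also carrying i; the geodesic from a to b must cross the
   edge and therefore passes through z, so by axiom (A) i is a label of z.
   To find such a z when all edges are useless, choose an oriented edge (u,v)
   whose side side E u v is full and of minimal cardinality: for any other
   neighbour w of u, the side side E w u is a proper subset, hence not full, so
   by uselessness side E u w is full. *)

lemma walk_distinct_of_rtrancl: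
  assumes "(a, b) \<in> R\<^sup>*"
  shows "\<exists>p. walk R p a b \<and> distinct p"
  using assms
proof (induction rule: converse_rtrancl_induct)
  case base
  show ?case by (rule exI[of _ "[b]"]) (simp add: walk_def)
next
  case (step a y)
  then obtain p where p: "walk R p y b" "distinct p" by blast
  show ?case
  proof (cases "a \<in> set p")
    case True
    then obtain k where k: "k < length p" "p ! k = a" by (metis in_set_conv_nth)
    have "walk R (drop k p) a b" using p k unfolding walk_def
      by (auto simp: hd_drop_conv_nth last_drop)
    then show ?thesis using p by (metis distinct_drop)
  next
    case False
    have "walk R (a # p) a b" unfolding walk_def
    proof (intro conjI allI impI)
      show "last (a # p) = b" using p by (auto simp: walk_def)
      fix i assume "Suc i < length (a # p)"
      then show "((a # p) ! i, (a # p) ! Suc i) \<in> R" using p step(1)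
        by (cases i) (auto simp: walk_def hd_conv_nth)
    qed auto
    then show ?thesis using p False by auto
  qed
qed

lemma geodesic_exists:
  assumes "(a, b) \<in> R\<^sup>*"
  shows "\<exists>p. geodesic R p a b"
proof -
  obtain q where "walk R q a b" using walk_distinct_of_rtrancl[OF assms] by blast
  then obtain p where "walk R p a b" "\<forall>q. walk R q a b \<longrightarrow> length p \<le> length q"
    using ex_has_least_nat[of "\<lambda>q. walk R q a b" q length] by blast
  then show ?thesis unfolding geodesic_def by blast
qed

lemma list_exits_set:
  "p \<noteq> [] \<Longrightarrow> hd p \<in> S \<Longrightarrow> last p \<notin> S \<Longrightarrow>
   \<exists>i. Suc i < length p \<and> p ! i \<in> S \<and> p ! Suc i \<notin> S"
proof (induction p)
  case Nil
  then show ?case by simp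
next
  case (Cons x xs)
  show ?case
  proof (cases "xs = []")
    case True
    then show ?thesis using Cons by simp
  next
    case False
    show ?thesis
    proof (cases "hd xs \<in> S")
      case True
      then obtain i where "Suc i < length xs" "xs ! i \<in> S" "xs ! Suc i \<notin> S"
        using Cons False by auto
      then show ?thesis by (intro exI[of _ "Suc i"]) auto
    next
      case outside: False
      then show ?thesis using Cons False by (intro exI[of _ 0]) (auto simp: hd_conv_nth)
    qed
  qed
qed

lemma side_refl: "u \<in> side E u v"
  unfolding side_def by simp

lemma side_step:
  "x \<in> side E u v \<Longrightarrow> (x, y) \<in> E \<Longrightarrow> (x, y) \<notin> {(u, v), (v, u)} \<Longrightarrow> y \<in> side E u v"
  unfolding side_def by (auto intro: rtrancl_into_rtrancl)

lemma side_subset_vertices: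
  assumes "E \<subseteq> V \<times> V" and "u \<in> V"
  shows "side E u v \<subseteq> V"
proof
  fix x assume "x \<in> side E u v"
  then have "(u, x) \<in> E\<^sup>*" unfolding side_def using rtrancl_mono[of "E - _" E] by blast
  then show "x \<in> V" using assms by (induction rule: rtrancl_induct) auto
qed

lemma reachable_in_some_side:
  assumes "(u, x) \<in> E\<^sup>*"
  shows "x \<in> side E u v \<or> x \<in> side E v u"
  using assms
proof (induction rule: rtrancl_induct)
  case base
  show ?case by (simp add: side_refl)
next
  case (step x y)
  show ?case
  proof (cases "(x, y) \<in> {(u, v), (v, u)}")
    case True
    then show ?thesis using side_refl[of u E v] side_refl[of v E u] by blast
  next
    case False
    then show ?thesis using step side_step[of x E u v y] side_step[of x E v u y] by auto
  qed
qed

lemma reachable_beyond_some_edge: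
  assumes "(z, a) \<in> E\<^sup>*"
  shows "a = z \<or> (\<exists>w. (z, w) \<in> E \<and> a \<in> side E w z)"
  using assms
proof (induction rule: rtrancl_induct)
  case base
  then show ?case by simp
next
  case (step x y)
  from step(3) show ?case
  proof
    assume "x = z"
    then show ?thesis using step(2) side_refl[of y E z] by blast
  next
    assume "\<exists>w. (z, w) \<in> E \<and> x \<in> side E w z"
    then obtain w where w: "(z, w) \<in> E" "x \<in> side E w z" by blast
    show ?thesis
    proof (cases "(x, y) \<in> {(w, z), (z, w)}")
      case True
      then show ?thesis using w(1) side_refl[of w E z] by blast
    next
      case False
      then show ?thesis using w side_step[OF w(2) step(2)] by blast
    qed
  qed
qed

lemma walk_leaving_side_passes:
  assumes p: "walk E p a b" and a: "a \<in> side E w z" and b: "b \<notin> side E w z"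
  shows "z \<in> set p"
proof -
  obtain i where i: "Suc i < length p" "p ! i \<in> side E w z" "p ! Suc i \<notin> side E w z"
    using list_exits_set[of p "side E w z"] p a b unfolding walk_def by auto
  have "(p ! i, p ! Suc i) \<in> E" using p i unfolding walk_def by auto
  then have "(p ! i, p ! Suc i) \<in> {(w, z), (z, w)}" using side_step[OF i(2)] i(3) by blast
  moreover have "p ! Suc i \<noteq> w" using i(3) side_refl by metis
  ultimately have "p ! Suc i = z" by auto
  then show ?thesis using i(1) by (metis nth_mem)
qed

text \<open>In a tree, removing the edge (u,w) disconnects u from w: otherwise a
  distinct walk from w to u avoiding the edge closes a cycle with it.\<close>
lemma tree_edge_separates:
  assumes T: "simplicial_tree V E" and uw: "(u, w) \<in> E"
  shows "u \<notin> side E w u"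
proof
  assume "u \<in> side E w u"
  then have "(w, u) \<in> (E - {(w, u), (u, w)})\<^sup>*" unfolding side_def by simp
  from walk_distinct_of_rtrancl[OF this]
  obtain p where p: "walk (E - {(w, u), (u, w)}) p w u" "distinct p" by blast
  have "u \<noteq> w" using T uw unfolding simplicial_tree_def by blast
  have walk: "walk E p w u" using p(1) unfolding walk_def by blast
  have "length p \<noteq> 1"
  proof
    assume "length p = 1"
    then obtain x where "p = [x]" by (auto simp: length_Suc_conv)
    then show False using p(1) \<open>u \<noteq> w\<close> by (auto simp: walk_def)
  qed
  moreover have "length p \<noteq> 2"
  proof
    assume "length p = 2"
    then obtain x y where xy: "p = [x, y]" by (auto simp: length_Suc_conv numeral_2_eq_2)
    then have "(x, y) \<in> E - {(w, u), (u, w)}" using p(1) unfolding walk_def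
      by (metis One_nat_def length_Cons lessI list.size(3) nth_Cons_0 nth_Cons_Suc)
    moreover have "x = w" "y = u" using p(1) xy by (auto simp: walk_def)
    ultimately show False by simp
  qed
  moreover have "length p \<noteq> 0" using p(1) by (simp add: walk_def)
  ultimately have "3 \<le> length p" by linarith
  then have "is_cycle E p" unfolding is_cycle_def using p(2) walk uw
    by (simp add: walk_def)
  then show False using T unfolding simplicial_tree_def by blast
qed

lemma tree_sides_disjoint:
  assumes T: "simplicial_tree V E" and zw: "(z, w) \<in> E"
  shows "side E z w \<inter> side E w z = {}"
proof (rule ccontr)
  let ?R = "E - {(w, z), (z, w)}"
  assume "side E z w \<inter> side E w z \<noteq> {}"
  then obtain x where zx: "(z, x) \<in> ?R\<^sup>*" and wx: "(w, x) \<in> ?R\<^sup>*"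
    unfolding side_def by (auto simp: insert_commute)
  have "sym ?R" using T unfolding simplicial_tree_def sym_def by blast
  then have "(x, z) \<in> ?R\<^sup>*" using zx sym_rtrancl symD by metis
  with wx have "(w, z) \<in> ?R\<^sup>*" by (rule rtrancl_trans)
  then have "z \<in> side E w z" unfolding side_def by simp
  then show False using tree_edge_separates[OF T zw] by blast
qed

lemma tree_side_strict_subset:
  assumes T: "simplicial_tree V E" and uv: "(u, v) \<in> E" and uw: "(u, w) \<in> E"
    and "w \<noteq> v"
  shows "side E w u \<subset> side E u v"
proof -
  have u_far: "u \<notin> side E w u" using tree_edge_separates[OF T uw] .
  have "u \<noteq> w" using T uw unfolding simplicial_tree_def by blast
  have "x \<in> side E u v" if "x \<in> side E w u" for x
  proof -
    have "(w, x) \<in> (E - {(w, u), (u, w)})\<^sup>*" using that unfolding side_def by simp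
    then show ?thesis
    proof (induction rule: rtrancl_induct)
      case base
      show ?case using side_step[OF side_refl uw] \<open>w \<noteq> v\<close> \<open>u \<noteq> w\<close> by auto
    next
      case (step y x)
      have "y \<in> side E w u" "x \<in> side E w u" using step(1,2) unfolding side_def
        by (auto intro: rtrancl_into_rtrancl)
      then have "y \<noteq> u" "x \<noteq> u" using u_far by auto
      then show ?case using side_step[OF step(3)] step(2) by auto
    qed
  qed
  then show ?thesis using u_far side_refl[of u E v] by blast
qed

lemma full_vertex_of_full_sides:
  assumes T: "simplicial_tree V E" and L: "labelling_system V E N Lab" and z: "z \<in> V"
    and full_sides: "\<And>w. (z, w) \<in> E \<Longrightarrow> (\<Union>x\<in>side E z w. Lab x) = {1..N}"
  shows "Lab z = {1..N}"
proof
  have U: "(\<Union>v\<in>V. Lab v) = {1..N}" using L unfolding labelling_system_def by blast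
  have EV: "E \<subseteq> V \<times> V" and conn: "\<forall>a\<in>V. \<forall>b\<in>V. (a, b) \<in> E\<^sup>*"
    using T unfolding simplicial_tree_def by blast+
  show "Lab z \<subseteq> {1..N}" using U z by blast
  show "{1..N} \<subseteq> Lab z"
  proof
    fix i assume i: "i \<in> {1..N}"
    then obtain a where a: "a \<in> V" "i \<in> Lab a" using U by blast
    have "(z, a) \<in> E\<^sup>*" using conn z a(1) by blast
    from reachable_beyond_some_edge[OF this]
    consider "a = z" | w where "(z, w) \<in> E" "a \<in> side E w z" by blast
    then show "i \<in> Lab z"
    proof cases
      case 1
      then show ?thesis using a by simp
    next
      case (2 w)
      obtain b where b: "b \<in> side E z w" "i \<in> Lab b" using full_sides[OF 2(1)] i by blast
      have "b \<in> V" using side_subset_vertices[OF EV z] b(1) by blast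
      have "b \<notin> side E w z" using tree_sides_disjoint[OF T 2(1)] b(1) by blast
      have "(a, b) \<in> E\<^sup>*" using conn a(1) \<open>b \<in> V\<close> by blast
      from geodesic_exists[OF this] obtain p where p: "geodesic E p a b" by blast
      then have "z \<in> set p" using walk_leaving_side_passes[OF _ 2(2) \<open>b \<notin> side E w z\<close>]
        unfolding geodesic_def by blast
      then have "on_path E a b z" unfolding on_path_def using p by blast
      then have "Lab a \<inter> Lab b \<subseteq> Lab z"
        using L a(1) \<open>b \<in> V\<close> unfolding labelling_system_def by blast
      then show ?thesis using a b by blast
    qed
  qed
qed

text \<open>If every edge is useless, some vertex is full: take an oriented edge whose
  full side is as small as possible; its source satisfies the key lemma.\<close>
lemma full_vertex_of_useless_edges:
  assumes T: "simplicial_tree V E" and L: "labelling_system V E N Lab"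
    and useless: "\<forall>(u, v)\<in>E. useless_edge E N Lab u v"
  shows "\<exists>z\<in>V. Lab z = {1..N}"
proof (cases "E = {}")
  case True
  have U: "(\<Union>v\<in>V. Lab v) = {1..N}" using L unfolding labelling_system_def by blast
  obtain z where z: "z \<in> V" and conn: "\<forall>b\<in>V. (z, b) \<in> E\<^sup>*"
    using T unfolding simplicial_tree_def by blast
  have "V = {z}"
  proof (intro equalityI subsetI)
    fix b assume "b \<in> V"
    then have "(z, b) \<in> Id" using conn True by simp
    then show "b \<in> {z}" by simp
  qed (use z in simp)
  then show ?thesis using U by simp
next
  case False
  have EV: "E \<subseteq> V \<times> V" and "finite V" and symE: "sym E"
    using T unfolding simplicial_tree_def by blast+
  define full_side where
    "full_side e \<longleftrightarrow> e \<in> E \<and> (\<Union>x\<in>side E (fst e) (snd e). Lab x) = {1..N}" for e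
  have useless_full: "full_side (u, v) \<or> full_side (v, u)" if "(u, v) \<in> E" for u v
  proof -
    have "useless_edge E N Lab u v" using useless that by blast
    then show ?thesis using that symD[OF symE that] unfolding useless_edge_def full_side_def by simp
  qed
  obtain u0 v0 where "(u0, v0) \<in> E" using False by auto
  then obtain e0 where "full_side e0" using useless_full by blast
  from ex_has_least_nat[of full_side e0 "\<lambda>e. card (side E (fst e) (snd e))", OF this]
  obtain e where e: "full_side e"
    and e_min: "\<forall>e'. full_side e' \<longrightarrow> card (side E (fst e) (snd e)) \<le> card (side E (fst e') (snd e'))"
    by blast
  obtain u v where uv_def: "e = (u, v)" by (cases e)
  have uv: "(u, v) \<in> E" using e uv_def unfolding full_side_def by simp
  have u: "u \<in> V" using uv EV by blast
  have "Lab u = {1..N}"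
  proof (rule full_vertex_of_full_sides[OF T L u])
    fix w assume uw: "(u, w) \<in> E"
    show "(\<Union>x\<in>side E u w. Lab x) = {1..N}"
    proof (cases "w = v")
      case True
      then show ?thesis using e uv_def unfolding full_side_def by simp
    next
      case False
      have "side E w u \<subset> side E u v" using tree_side_strict_subset[OF T uv uw False] .
      moreover have "finite (side E u v)"
        using side_subset_vertices[OF EV u] \<open>finite V\<close> finite_subset by blast
      ultimately have "card (side E w u) < card (side E u v)" by (rule psubset_card_mono[rotated])
      then have "\<not> full_side (w, u)" using e_min[rule_format, of "(w, u)"] uv_def by auto
      then show ?thesis using useless_full[OF uw] symD[OF symE uw]
        unfolding full_side_def by auto
    qed
  qed
  with u show ?thesis ..
qed

text \<open>Conversely, a full vertex lies on one side of every edge, making it useless.\<close>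
lemma useless_edges_of_full_vertex:
  assumes T: "simplicial_tree V E" and L: "labelling_system V E N Lab"
    and z: "z \<in> V" "Lab z = {1..N}"
  shows "\<forall>(u, v)\<in>E. useless_edge E N Lab u v"
proof clarify
  fix u v assume uv: "(u, v) \<in> E"
  have U: "(\<Union>v\<in>V. Lab v) = {1..N}" using L unfolding labelling_system_def by blast
  have EV: "E \<subseteq> V \<times> V" and conn: "\<forall>a\<in>V. \<forall>b\<in>V. (a, b) \<in> E\<^sup>*"
    using T unfolding simplicial_tree_def by blast+
  have full_if_contains_z: "(\<Union>x\<in>side E a b. Lab x) = {1..N}"
    if "a \<in> V" "z \<in> side E a b" for a b
    using side_subset_vertices[OF EV that(1), of b] U z(2) that(2) by blast
  have "u \<in> V" "v \<in> V" using uv EV by auto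
  then have "(u, z) \<in> E\<^sup>*" using conn z(1) by blast
  then have "z \<in> side E u v \<or> z \<in> side E v u" by (rule reachable_in_some_side)
  then show "useless_edge E N Lab u v"
    unfolding useless_edge_def using full_if_contains_z \<open>u \<in> V\<close> \<open>v \<in> V\<close> by blast
qed

theorem mainTheorem10:
  fixes V :: "'a set" and E :: "('a \<times> 'a) set" and N :: nat and Lab :: "'a \<Rightarrow> nat set"
  assumes "simplicial_tree V E"
    and "labelling_system V E N Lab"
  shows "(\<forall>(u, v)\<in>E. useless_edge E N Lab u v) \<longleftrightarrow> (\<exists>z\<in>V. Lab z = {1..N})"
  using full_vertex_of_useless_edges[OF assms] useless_edges_of_full_vertex[OF assms] by blast

end
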